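(* Let $S$ be a random walk on $\mathbb{Z}^2$ with symmetric, sub-Gaussian increments and let $\mathsf c\in[1,\infty)$ be as in the context. For every $f:\mathbb{Z}^2\to\mathbb{R}$, $t\ge0$, $n\in\mathbb{N}$ and $p\in[1,\infty]$, $$\Big\|\frac{q^f_n}{w_t}\Big\|_{\ell^p}\le\mathsf c\,e^{2\mathsf ct^2n}\Big\|\frac f{w_t}\Big\|_{\ell^p},\qquad\Big\|\frac{q^f_n}{w_t}\Big\|_{\ell^\infty}\le\frac{\mathsf c\,e^{2\mathsf ct^2n}}{n^{1/p}}\Big\|\frac f{w_t}\Big\|_{\ell^p},$$ with the convention $n^{1/\infty}:=1$.
   Context: Assumption on the walk: $q_1(x)=q_1(-x)$ and there is $c>0$ with $\sum_xe^{tx^a}q_1(x)\le e^{ct^2/2}$ for all $t\in\mathbb{R}$, $a=1,2$. Here $q_n(x):=\mathrm{P}(S_n=x\mid S_0=0)$, $q^f_n(x):=\sum_{z\in\mathbb{Z}^2}q_n(x-z)f(z)$, $w_t(x):=e^{-t|x|}$, and $\|\cdot\|_{\ell^p}$ is the $\ell^p(\mathbb{Z}^2)$ norm. $\mathsf c\in[1,\infty)$ is a constant (depending only on the walk) such that for all $t\ge0$, $n\in\mathbb{N}$, $a=1,2$: $\sum_xe^{tx^a}q_n(x)\le e^{\mathsf ct^2n/2}$, $\sum_xe^{tx^a}q_n(x)^2/q_{2n}(0)\le e^{\mathsf ct^2n/2}$, $\sum_xe^{t|x|}q_n(x)\le\mathsf ce^{2\mathsf ct^2n}$, $\sup_xe^{t|x|}q_n(x)\le\mathsf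 ce^{2\mathsf ct^2n}/n$ (such a constant exists). *)

theory Defs
  imports "HOL-Analysis.Analysis"
begin

type_synonym z2 = "int \<times> int"

definition enorm2 :: "z2 \<Rightarrow> real" where
  "enorm2 x = sqrt (real_of_int (fst x) ^ 2 + real_of_int (snd x) ^ 2)"

text \<open>n-step transition probabilities q_n(x) = P(S_n = x | S_0 = 0) of the walk
  with one-step law q1 (n-fold convolution of q1).\<close>
fun qn :: "(z2 \<Rightarrow> real) \<Rightarrow> nat \<Rightarrow> z2 \<Rightarrow> real" where
  "qn q1 0 = (\<lambda>x. if x = 0 then 1 else 0)"
| "qn q1 (Suc n) = (\<lambda>x. infsum (\<lambda>z. qn q1 n (x - z) * q1 z) UNIV)"

definition qnf :: "(z2 \<Rightarrow> real) \<Rightarrow> nat \<Rightarrow> (z2 \<Rightarrow> real) \<Rightarrow> z2 \<Rightarrow> real" where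
  "qnf q1 n f x = infsum (\<lambda>z. qn q1 n (x - z) * f z) UNIV"

definition wt :: "real \<Rightarrow> z2 \<Rightarrow> real" where
  "wt t x = exp (- t * enorm2 x)"

definition lp_norm :: "ennreal \<Rightarrow> (z2 \<Rightarrow> real) \<Rightarrow> ennreal" where
  "lp_norm p g =
     (if p = \<infinity> then (SUP x. ennreal \<bar>g x\<bar>)
      else (let s = (nn_integral (count_space UNIV) (\<lambda>x. ennreal (\<bar>g x\<bar> powr enn2real p)))
            in if s = \<infinity> then \<infinity> else ennreal (enn2real s powr (1 / enn2real p))))"

definition root_p :: "nat \<Rightarrow> ennreal \<Rightarrow> real" where
  "root_p n p = (if p = \<infinity> then 1 else real n powr (1 / enn2real p))"

end

theory Submission
  imports Defs
begin

text \<open>Since |x| \<le> |x - z| + |z|, we have 1 / w_t(x) \<le> e^(t|x - z|) / w_t(z), so |q^f_n / w_t| is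
  dominated pointwise by the convolution of the kernel K = e^(t|.|) q_n with G = |f / w_t|. The
  hypotheses on c bound ||K||_1 by C = c e^(2ct^2 n) and ||K||_inf by C / n, and Young's convolution
  inequalities ||K * G||_p \<le> ||K||_1 ||G||_p and ||K * G||_inf \<le> ||K||_1^(1-1/p) ||K||_inf^(1/p) ||G||_p
  give the two bounds. Both follow from Jensen's inequality (sum k g)^p \<le> (sum k)^(p-1) sum k g^p
  for the weights k = K(x - .), itself a consequence of Young's inequality for products.
  Sums are integrals over the counting measure with values in ennreal, so no summability
  hypotheses are needed.\<close>

lemma abs_infsum_le_nn_integral:
  fixes h :: "'a \<Rightarrow> real"
  shows "ennreal \<bar>infsum h UNIV\<bar> \<le> (\<integral>\<^sup>+x. ennreal \<bar>h x\<bar> \<partial>count_space UNIV)"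
proof (cases "h summable_on UNIV")
  case True
  then have abs: "Infinite_Sum.abs_summable_on h UNIV"
    using summable_on_iff_abs_summable_on_real by blast
  then have "Infinite_Set_Sum.abs_summable_on h UNIV"
    using abs_summable_equivalent by blast
  then have "Infinite_Set_Sum.abs_summable_on (\<lambda>x. \<bar>h x\<bar>) UNIV"
    by (simp add: abs_summable_on_def)
  moreover have "\<bar>infsum h UNIV\<bar> \<le> infsum (\<lambda>x. \<bar>h x\<bar>) UNIV"
    using norm_infsum_bound[OF abs] by simp
  ultimately show ?thesis
    by (simp add: nn_integral_conv_infsetsum infsetsum_infsum ennreal_leI)
next
  case False
  then show ?thesis by (simp add: infsum_not_exists)
qed

lemma Youngs_inequality_powr_conjugate:
  fixes g a r :: real
  assumes "0 \<le> g" "0 < a" "1 \<le> r"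
  shows "g * a powr (r - 1) \<le> g powr r / r + (r - 1) / r * a powr r"
proof (cases "r = 1")
  case True
  then show ?thesis using assms by simp
next
  case False
  then have r: "r > 1" using assms by simp
  define q where "q = r / (r - 1)"
  have "1 < q" "1/r + 1/q = 1" using r by (simp_all add: q_def field_simps)
  then have "g * a powr (r - 1) \<le> g powr r / r + (a powr (r - 1)) powr q / q"
    using Youngs_inequality[OF r _ _ assms(1)] by simp
  also have "(a powr (r - 1)) powr q / q = (r - 1) / r * a powr r"
    using r by (simp add: powr_powr q_def)
  finally show ?thesis .
qed

lemma nn_integral_weighted_power_mean:
  fixes k g :: "'a \<Rightarrow> real"
  assumes k0: "\<And>x. 0 \<le> k x" and g0: "\<And>x. 0 \<le> g x" and r: "1 \<le> r"
    and mass: "(\<integral>\<^sup>+x. ennreal (k x) \<partial>count_space UNIV) \<le> ennreal K"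
    and m0: "0 \<le> m" and m: "ennreal m \<le> (\<integral>\<^sup>+x. ennreal (k x * g x) \<partial>count_space UNIV)"
  shows "ennreal (m powr r) \<le>
    ennreal (K powr (r - 1)) * (\<integral>\<^sup>+x. ennreal (k x * g x powr r) \<partial>count_space UNIV)"
proof (cases "m = 0")
  case True
  then show ?thesis by simp
next
  case False
  then have m_pos: "0 < m" using m0 by simp
  define T where "T = (\<integral>\<^sup>+x. ennreal (k x * g x powr r) \<partial>count_space UNIV)"
  have K_pos: "0 < K"
  proof (rule ccontr)
    assume "\<not> 0 < K"
    then have "(\<integral>\<^sup>+x. ennreal (k x) \<partial>count_space UNIV) = 0"
      using mass ennreal_neg[of K] by simp
    then have "\<And>x. k x = 0"
      using k0 by (simp add: nn_integral_0_iff_AE AE_count_space)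
    then show False using m m_pos by simp
  qed
  have Young: "ennreal (a powr (r - 1) * m) \<le> ennreal (1 / r) * T + ennreal ((r - 1) / r * a powr r) * ennreal K"
    if a: "0 < a" for a
  proof -
    have "ennreal (a powr (r - 1) * m) = ennreal (a powr (r - 1)) * ennreal m"
      using m0 by (simp add: ennreal_mult)
    also have "\<dots> \<le> (\<integral>\<^sup>+x. ennreal (a powr (r - 1)) * ennreal (k x * g x) \<partial>count_space UNIV)"
      using m by (simp add: nn_integral_cmult mult_left_mono)
    also have "\<dots> \<le> (\<integral>\<^sup>+x. ennreal (1 / r) * ennreal (k x * g x powr r)
                        + ennreal ((r - 1) / r * a powr r) * ennreal (k x) \<partial>count_space UNIV)"
    proof (rule nn_integral_mono)
      fix x
      have "k x * (g x * a powr (r - 1)) \<le> k x * (g x powr r / r + (r - 1) / r * a powr r)"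
        using Youngs_inequality_powr_conjugate[OF g0 a r] k0 by (rule mult_left_mono)
      then have "ennreal (a powr (r - 1) * (k x * g x))
          \<le> ennreal (1 / r * (k x * g x powr r) + (r - 1) / r * a powr r * k x)"
        by (intro ennreal_leI) (simp add: algebra_simps)
      moreover have "0 \<le> k x * g x" "0 \<le> k x * g x powr r" "0 \<le> (r - 1) / r * a powr r"
        using k0[of x] g0[of x] r by simp_all
      ultimately show "ennreal (a powr (r - 1)) * ennreal (k x * g x)
          \<le> ennreal (1 / r) * ennreal (k x * g x powr r) + ennreal ((r - 1) / r * a powr r) * ennreal (k x)"
        using k0[of x] r by (simp add: ennreal_mult[symmetric] ennreal_plus[symmetric] del: ennreal_plus)
    qed
    also have "\<dots> = ennreal (1 / r) * T +
        ennreal ((r - 1) / r * a powr r) * (\<integral>\<^sup>+x. ennreal (k x) \<partial>count_space UNIV)"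
      unfolding T_def by (simp add: nn_integral_add nn_integral_cmult)
    also have "\<dots> \<le> ennreal (1 / r) * T + ennreal ((r - 1) / r * a powr r) * ennreal K"
      using mass by (intro add_left_mono mult_left_mono) simp_all
    finally show ?thesis .
  qed
  show ?thesis
  proof (cases "T = \<infinity>")
    case True
    then show ?thesis using K_pos by (simp add: T_def ennreal_mult_top)
  next
    case False
    then obtain T' where T': "T = ennreal T'" "0 \<le> T'" by (cases T) auto
    \<comment> \<open>Choosing \<open>a = m / K\<close> in Young's inequality makes both sides proportional to \<open>X\<close>.\<close>
    define X where "X = m powr r / K powr (r - 1)"
    have X: "(m / K) powr (r - 1) * m = X" "(m / K) powr r * K = X"
      using m_pos K_pos by (simp_all add: X_def powr_divide powr_diff)
    have "ennreal (1 / r) * T + ennreal ((r - 1) / r * (m / K) powr r) * ennreal K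
        = ennreal (T' / r + (r - 1) / r * X)"
      using T' r K_pos m_pos
      by (simp add: X(2)[symmetric] ennreal_mult[symmetric] ennreal_plus[symmetric] mult.assoc
          del: ennreal_plus)
    then have "ennreal X \<le> ennreal (T' / r + (r - 1) / r * X)"
      using Young[of "m / K"] m_pos K_pos X(1) by simp
    then have "X \<le> T' / r + (r - 1) / r * X"
      using r T' m_pos K_pos by (subst (asm) ennreal_le_iff) (auto simp: X_def)
    then have "X \<le> T'"
      using r by (simp add: field_simps)
    then have "m powr r \<le> K powr (r - 1) * T'"
      using K_pos by (simp add: X_def divide_le_eq mult.commute)
    then show ?thesis
      using T' K_pos by (simp add: T_def ennreal_mult[symmetric] ennreal_leI)
  qed
qed

lemma nn_integral_count_space_reflect:
  fixes F :: "'a::ab_group_add \<Rightarrow> ennreal"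
  shows "(\<integral>\<^sup>+z. F (x - z) \<partial>count_space UNIV) = (\<integral>\<^sup>+y. F y \<partial>count_space UNIV)"
  by (rule nn_integral_bij_count_space, rule bij_betwI[where g="\<lambda>z. x - z"]) auto

lemma nn_integral_count_space_translate:
  fixes F :: "'a::group_add \<Rightarrow> ennreal"
  shows "(\<integral>\<^sup>+x. F (x - z) \<partial>count_space UNIV) = (\<integral>\<^sup>+y. F y \<partial>count_space UNIV)"
  by (rule nn_integral_bij_count_space, rule bij_betwI[where g="\<lambda>x. x + z"]) auto

lemma convolution_powr_le:
  fixes K g h :: "'a::ab_group_add \<Rightarrow> real"
  assumes K0: "\<And>y. 0 \<le> K y" and r: "1 \<le> r"
    and mass: "(\<integral>\<^sup>+y. ennreal (K y) \<partial>count_space UNIV) \<le> ennreal C"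
    and dom: "ennreal \<bar>h x\<bar> \<le> (\<integral>\<^sup>+z. ennreal (K (x - z) * \<bar>g z\<bar>) \<partial>count_space UNIV)"
  shows "ennreal (\<bar>h x\<bar> powr r) \<le>
    ennreal (C powr (r - 1)) * (\<integral>\<^sup>+z. ennreal (K (x - z) * \<bar>g z\<bar> powr r) \<partial>count_space UNIV)"
  using mass dom
  by (intro nn_integral_weighted_power_mean[OF K0 abs_ge_zero r])
     (simp_all add: nn_integral_count_space_reflect[of "\<lambda>y. ennreal (K y)"])

lemma convolution_powr_sum_le:
  fixes K g h :: "'a::{ab_group_add, countable} \<Rightarrow> real"
  assumes K0: "\<And>y. 0 \<le> K y" and r: "1 \<le> r" and C: "0 \<le> C"
    and mass: "(\<integral>\<^sup>+y. ennreal (K y) \<partial>count_space UNIV) \<le> ennreal C"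
    and dom: "\<And>x. ennreal \<bar>h x\<bar> \<le> (\<integral>\<^sup>+z. ennreal (K (x - z) * \<bar>g z\<bar>) \<partial>count_space UNIV)"
  shows "(\<integral>\<^sup>+x. ennreal (\<bar>h x\<bar> powr r) \<partial>count_space UNIV) \<le>
    ennreal (C powr r) * (\<integral>\<^sup>+z. ennreal (\<bar>g z\<bar> powr r) \<partial>count_space UNIV)"
proof -
  have "(\<integral>\<^sup>+x. ennreal (\<bar>h x\<bar> powr r) \<partial>count_space UNIV) \<le>
      (\<integral>\<^sup>+x. ennreal (C powr (r - 1)) *
        (\<integral>\<^sup>+z. ennreal (K (x - z) * \<bar>g z\<bar> powr r) \<partial>count_space UNIV) \<partial>count_space UNIV)"
    using convolution_powr_le[where h=h and g=g, OF K0 r mass dom] by (rule nn_integral_mono)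
  also have "\<dots> = ennreal (C powr (r - 1)) *
      (\<integral>\<^sup>+z. (\<integral>\<^sup>+x. ennreal (K (x - z)) \<partial>count_space UNIV) * ennreal (\<bar>g z\<bar> powr r)
        \<partial>count_space UNIV)"
    by (subst nn_integral_cmult, simp, subst nn_integral_count_space_nn_integral)
      (auto intro!: nn_integral_cong simp: nn_integral_multc ennreal_mult'')
  also have "\<dots> \<le> ennreal (C powr (r - 1)) * (\<integral>\<^sup>+z. ennreal C * ennreal (\<bar>g z\<bar> powr r) \<partial>count_space UNIV)"
    using mass by (intro mult_left_mono nn_integral_mono mult_right_mono)
      (simp_all add: nn_integral_count_space_translate[of "\<lambda>y. ennreal (K y)"])
  also have "\<dots> = ennreal (C powr (r - 1) * C) * (\<integral>\<^sup>+z. ennreal (\<bar>g z\<bar> powr r) \<partial>count_space UNIV)"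
    using C by (simp add: nn_integral_cmult ennreal_mult mult.assoc)
  also have "C powr (r - 1) * C = C powr r"
    using C r by (cases "C = 0") (simp_all add: powr_diff)
  finally show ?thesis .
qed

lemma convolution_powr_le_bounded_kernel:
  fixes K g h :: "'a::ab_group_add \<Rightarrow> real"
  assumes K0: "\<And>y. 0 \<le> K y" and r: "1 \<le> r" and KB: "\<And>y. K y \<le> B"
    and mass: "(\<integral>\<^sup>+y. ennreal (K y) \<partial>count_space UNIV) \<le> ennreal C"
    and dom: "ennreal \<bar>h x\<bar> \<le> (\<integral>\<^sup>+z. ennreal (K (x - z) * \<bar>g z\<bar>) \<partial>count_space UNIV)"
  shows "ennreal (\<bar>h x\<bar> powr r) \<le>
    ennreal (C powr (r - 1) * B) * (\<integral>\<^sup>+z. ennreal (\<bar>g z\<bar> powr r) \<partial>count_space UNIV)"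
proof -
  have B: "0 \<le> B" using K0 KB order_trans by blast
  have "ennreal (\<bar>h x\<bar> powr r) \<le>
      ennreal (C powr (r - 1)) * (\<integral>\<^sup>+z. ennreal (K (x - z) * \<bar>g z\<bar> powr r) \<partial>count_space UNIV)"
    by (rule convolution_powr_le[where h=h and g=g, OF K0 r mass dom])
  also have "\<dots> \<le> ennreal (C powr (r - 1)) * (\<integral>\<^sup>+z. ennreal B * ennreal (\<bar>g z\<bar> powr r) \<partial>count_space UNIV)"
    using KB B by (intro mult_left_mono nn_integral_mono)
      (simp_all add: ennreal_mult[symmetric] ennreal_leI mult_right_mono)
  also have "\<dots> = ennreal (C powr (r - 1) * B) * (\<integral>\<^sup>+z. ennreal (\<bar>g z\<bar> powr r) \<partial>count_space UNIV)"
    using B by (simp add: nn_integral_cmult ennreal_mult mult.assoc)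
  finally show ?thesis .
qed

lemma lp_norm_infinity_le:
  assumes "\<And>x. ennreal \<bar>h x\<bar> \<le> B"
  shows "lp_norm \<infinity> h \<le> B"
  using assms unfolding lp_norm_def by (simp add: SUP_least)

lemma lp_norm_le_if_powr_sum_le:
  assumes r: "0 < r" and C: "0 < C"
    and le: "(\<integral>\<^sup>+x. ennreal (\<bar>h x\<bar> powr r) \<partial>count_space UNIV) \<le>
      ennreal (C powr r) * (\<integral>\<^sup>+x. ennreal (\<bar>g x\<bar> powr r) \<partial>count_space UNIV)"
  shows "lp_norm (ennreal r) h \<le> ennreal C * lp_norm (ennreal r) g"
proof (cases "(\<integral>\<^sup>+x. ennreal (\<bar>g x\<bar> powr r) \<partial>count_space UNIV)")
  case (real s)
  then have "(\<integral>\<^sup>+x. ennreal (\<bar>h x\<bar> powr r) \<partial>count_space UNIV) \<le> ennreal (C powr r * s)"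
    using le C by (simp add: ennreal_mult)
  then obtain u where u: "(\<integral>\<^sup>+x. ennreal (\<bar>h x\<bar> powr r) \<partial>count_space UNIV) = ennreal u"
    "0 \<le> u" "u \<le> C powr r * s"
    using mult_nonneg_nonneg[OF powr_ge_zero real(1), of C r]
    by (cases "\<integral>\<^sup>+x. ennreal (\<bar>h x\<bar> powr r) \<partial>count_space UNIV") (auto simp: top_unique)
  have "u powr (1 / r) \<le> (C powr r * s) powr (1 / r)"
    using u r by (simp add: powr_mono2)
  also have "\<dots> = C * s powr (1 / r)"
    using C real r by (simp add: powr_mult powr_powr)
  finally have "ennreal (u powr (1 / r)) \<le> ennreal C * ennreal (s powr (1 / r))"
    using C by (simp add: ennreal_mult[symmetric])
  then show ?thesis
    using u real r by (simp add: lp_norm_def)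
next
  case top
  then show ?thesis using r C by (simp add: lp_norm_def)
qed

lemma lp_norm_infinity_le_if_powr_le:
  assumes r: "0 < r" and B: "0 < B"
    and le: "\<And>x. ennreal (\<bar>h x\<bar> powr r) \<le>
      ennreal (B powr r) * (\<integral>\<^sup>+x. ennreal (\<bar>g x\<bar> powr r) \<partial>count_space UNIV)"
  shows "lp_norm \<infinity> h \<le> ennreal B * lp_norm (ennreal r) g"
proof (cases "(\<integral>\<^sup>+x. ennreal (\<bar>g x\<bar> powr r) \<partial>count_space UNIV)")
  case (real s)
  have "\<bar>h x\<bar> \<le> B * s powr (1 / r)" for x
  proof -
    have "\<bar>h x\<bar> powr r \<le> B powr r * s"
      using le[of x] real B by (simp add: ennreal_mult[symmetric])
    then have "(\<bar>h x\<bar> powr r) powr (1 / r) \<le> (B powr r * s) powr (1 / r)"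
      using r by (simp add: powr_mono2)
    then show ?thesis
      using r B real by (simp add: powr_mult powr_powr)
  qed
  then have "lp_norm \<infinity> h \<le> ennreal B * ennreal (s powr (1 / r))"
    using B by (intro lp_norm_infinity_le) (simp add: ennreal_mult[symmetric])
  then show ?thesis
    using real r by (simp add: lp_norm_def)
next
  case top
  then show ?thesis
    using r B by (simp add: lp_norm_def)
qed

lemma lp_norm_convolution_le:
  fixes K g h :: "z2 \<Rightarrow> real"
  assumes K0: "\<And>y. 0 \<le> K y" and C: "0 < C" and p: "1 \<le> p"
    and mass: "(\<integral>\<^sup>+y. ennreal (K y) \<partial>count_space UNIV) \<le> ennreal C"
    and dom: "\<And>x. ennreal \<bar>h x\<bar> \<le> (\<integral>\<^sup>+z. ennreal (K (x - z) * \<bar>g z\<bar>) \<partial>count_space UNIV)"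
  shows "lp_norm p h \<le> ennreal C * lp_norm p g"
proof (cases p)
  case (real r)
  then have "1 \<le> r" using p by simp
  then show ?thesis
    using convolution_powr_sum_le[OF K0 _ _ mass dom] lp_norm_le_if_powr_sum_le C real by simp
next
  case top
  have "ennreal \<bar>h x\<bar> \<le> ennreal C * lp_norm \<infinity> g" for x
  proof -
    have "ennreal \<bar>h x\<bar> \<le> (\<integral>\<^sup>+z. ennreal (K (x - z)) * lp_norm \<infinity> g \<partial>count_space UNIV)"
      using dom[of x] K0
      by (elim order_trans, intro nn_integral_mono)
        (auto simp: lp_norm_def ennreal_mult intro!: mult_left_mono SUP_upper)
    also have "\<dots> \<le> ennreal C * lp_norm \<infinity> g"
      using mass by (simp add: nn_integral_multc nn_integral_count_space_reflect[of "\<lambda>y. ennreal (K y)"] mult_right_mono)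
    finally show ?thesis .
  qed
  then have "lp_norm \<infinity> h \<le> ennreal C * lp_norm \<infinity> g"
    by (rule lp_norm_infinity_le)
  then show ?thesis using top by simp
qed

lemma lp_norm_infinity_convolution_le:
  fixes K g h :: "z2 \<Rightarrow> real"
  assumes K0: "\<And>y. 0 \<le> K y" and C: "0 < C" and r: "1 \<le> r" and KB: "\<And>y. K y \<le> B" and B: "0 < B"
    and mass: "(\<integral>\<^sup>+y. ennreal (K y) \<partial>count_space UNIV) \<le> ennreal C"
    and dom: "\<And>x. ennreal \<bar>h x\<bar> \<le> (\<integral>\<^sup>+z. ennreal (K (x - z) * \<bar>g z\<bar>) \<partial>count_space UNIV)"
  shows "lp_norm \<infinity> h \<le> ennreal (C powr (1 - 1 / r) * B powr (1 / r)) * lp_norm (ennreal r) g"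
proof (rule lp_norm_infinity_le_if_powr_le)
  have "(C powr (1 - 1 / r) * B powr (1 / r)) powr r = C powr (r - 1) * B"
  proof -
    have "(1 - 1 / r) * r = r - 1" using r by (simp add: field_simps)
    then show ?thesis using C B r by (simp add: powr_mult powr_powr)
  qed
  then show "ennreal (\<bar>h x\<bar> powr r) \<le> ennreal ((C powr (1 - 1 / r) * B powr (1 / r)) powr r) *
      (\<integral>\<^sup>+x. ennreal (\<bar>g x\<bar> powr r) \<partial>count_space UNIV)" for x
    using convolution_powr_le_bounded_kernel[where h=h and g=g, OF K0 r KB mass dom] by simp
qed (use r C B in auto)

lemma qn_nonneg:
  assumes "\<forall>x. 0 \<le> q1 x"
  shows "0 \<le> qn q1 n x"
proof (induction n arbitrary: x)
  case 0
  then show ?case by simp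
next
  case (Suc n)
  then show ?case using assms by (simp del: split_paired_All add: infsum_nonneg)
qed

lemma enorm2_triangle: "enorm2 x \<le> enorm2 (x - z) + enorm2 z"
proof -
  have "enorm2 x = norm ((real_of_int (fst (x - z)), real_of_int (snd (x - z))) +
                         (real_of_int (fst z), real_of_int (snd z)))"
    by (simp add: enorm2_def norm_Pair)
  also have "\<dots> \<le> enorm2 (x - z) + enorm2 z"
    by (rule norm_triangle_le) (simp add: enorm2_def norm_Pair)
  finally show ?thesis .
qed

lemma abs_qnf_div_wt_le_convolution:
  assumes q1_nonneg: "\<forall>x. 0 \<le> q1 x" and t: "0 \<le> t"
  shows "ennreal \<bar>qnf q1 n f x / wt t x\<bar> \<le>
    (\<integral>\<^sup>+z. ennreal (exp (t * enorm2 (x - z)) * qn q1 n (x - z) * \<bar>f z / wt t z\<bar>) \<partial>count_space UNIV)"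
    (is "_ \<le> ?rhs")
proof -
  have "ennreal \<bar>qnf q1 n f x / wt t x\<bar> = ennreal \<bar>qnf q1 n f x\<bar> * ennreal (exp (t * enorm2 x))"
    by (simp add: wt_def abs_divide abs_mult exp_minus ennreal_mult[symmetric] divide_inverse)
  also have "\<dots> \<le> (\<integral>\<^sup>+z. ennreal \<bar>qn q1 n (x - z) * f z\<bar> \<partial>count_space UNIV) * ennreal (exp (t * enorm2 x))"
    unfolding qnf_def by (intro mult_right_mono abs_infsum_le_nn_integral) simp
  also have "\<dots> = (\<integral>\<^sup>+z. ennreal (\<bar>qn q1 n (x - z) * f z\<bar> * exp (t * enorm2 x)) \<partial>count_space UNIV)"
    by (simp add: nn_integral_multc ennreal_mult)
  also have "\<dots> \<le> ?rhs"
  proof (intro nn_integral_mono ennreal_leI)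
    fix z
    have "exp (t * enorm2 x) \<le> exp (t * enorm2 (x - z)) * exp (t * enorm2 z)"
      using mult_left_mono[OF enorm2_triangle[of x z] t] by (simp add: distrib_left exp_add[symmetric])
    then have "\<bar>qn q1 n (x - z) * f z\<bar> * exp (t * enorm2 x) \<le>
        \<bar>qn q1 n (x - z) * f z\<bar> * (exp (t * enorm2 (x - z)) * exp (t * enorm2 z))"
      by (rule mult_left_mono) simp
    then show "\<bar>qn q1 n (x - z) * f z\<bar> * exp (t * enorm2 x) \<le>
        exp (t * enorm2 (x - z)) * qn q1 n (x - z) * \<bar>f z / wt t z\<bar>"
      using qn_nonneg[OF q1_nonneg] by (simp add: wt_def abs_mult abs_divide exp_minus field_simps)
  qed
  finally show ?thesis .
qed

theorem lemma4p17:
  fixes q1 :: "z2 \<Rightarrow> real" and c :: real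
    and f :: "z2 \<Rightarrow> real" and t :: real and n :: nat and p :: ennreal
  assumes q1_nonneg: "\<forall>x. 0 \<le> q1 x"
    and q1_prob: "(q1 has_sum 1) UNIV"
    and q1_sym: "\<forall>x. q1 x = q1 (- x)"
    and q1_subgauss: "\<exists>c0>0. \<forall>s::real. \<forall>\<pi>\<in>{fst, snd}.
          (nn_integral (count_space UNIV) (\<lambda>x. ennreal (exp (s * real_of_int (\<pi> x)) * q1 x))) \<le> ennreal (exp (c0 * s^2 / 2))"
    and c_ge1: "1 \<le> c"
    and c1: "\<forall>s\<ge>0. \<forall>m\<ge>1. \<forall>\<pi>\<in>{fst, snd}.
          (nn_integral (count_space UNIV) (\<lambda>x. ennreal (exp (s * real_of_int (\<pi> x)) * qn q1 m x)))
            \<le> ennreal (exp (c * s^2 * real m / 2))"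
    and c2: "\<forall>s\<ge>0. \<forall>m\<ge>1. \<forall>\<pi>\<in>{fst, snd}.
          (nn_integral (count_space UNIV) (\<lambda>x. ennreal (exp (s * real_of_int (\<pi> x)) * qn q1 m x ^ 2 / qn q1 (2 * m) 0)))
            \<le> ennreal (exp (c * s^2 * real m / 2))"
    and c3: "\<forall>s\<ge>0. \<forall>m\<ge>1.
          (nn_integral (count_space UNIV) (\<lambda>x. ennreal (exp (s * enorm2 x) * qn q1 m x)))
            \<le> ennreal (c * exp (2 * c * s^2 * real m))"
    and c4: "\<forall>s\<ge>0. \<forall>m\<ge>1. \<forall>x.
          exp (s * enorm2 x) * qn q1 m x \<le> c * exp (2 * c * s^2 * real m) / real m"
    and t_nonneg: "0 \<le> t"
    and n_pos: "1 \<le> n"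
    and p_ge1: "1 \<le> p"
  shows "lp_norm p (\<lambda>x. qnf q1 n f x / wt t x)
           \<le> ennreal (c * exp (2 * c * t^2 * real n)) * lp_norm p (\<lambda>x. f x / wt t x)
       \<and> lp_norm \<infinity> (\<lambda>x. qnf q1 n f x / wt t x)
           \<le> ennreal (c * exp (2 * c * t^2 * real n) / root_p n p) * lp_norm p (\<lambda>x. f x / wt t x)"
proof -
  \<comment> \<open>Only \<open>c3\<close> and \<open>c4\<close> enter; the remaining hypotheses merely describe the walk.\<close>
  define C where "C = c * exp (2 * c * t^2 * real n)"
  define K where "K y = exp (t * enorm2 y) * qn q1 n y" for y
  have C: "0 < C" using c_ge1 by (simp add: C_def)
  have K0: "0 \<le> K y" for y using qn_nonneg[OF q1_nonneg] by (simp add: K_def)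
  have mass: "(\<integral>\<^sup>+y. ennreal (K y) \<partial>count_space UNIV) \<le> ennreal C"
    using c3 t_nonneg n_pos by (simp add: K_def C_def)
  have KB: "K y \<le> C / real n" for y
    using c4 t_nonneg n_pos unfolding K_def C_def by blast
  have dom: "ennreal \<bar>qnf q1 n f x / wt t x\<bar> \<le>
      (\<integral>\<^sup>+z. ennreal (K (x - z) * \<bar>f z / wt t z\<bar>) \<partial>count_space UNIV)" for x
    using abs_qnf_div_wt_le_convolution[OF q1_nonneg t_nonneg] by (simp add: K_def)
  have lp: "lp_norm p (\<lambda>x. qnf q1 n f x / wt t x) \<le> ennreal C * lp_norm p (\<lambda>x. f x / wt t x)"
    using lp_norm_convolution_le[OF K0 C p_ge1 mass dom] .
  moreover have "lp_norm \<infinity> (\<lambda>x. qnf q1 n f x / wt t x)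
      \<le> ennreal (C / root_p n p) * lp_norm p (\<lambda>x. f x / wt t x)"
  proof (cases p)
    case (real r)
    then have r: "1 \<le> r" using p_ge1 by simp
    have "C powr (1 - 1 / r) * (C / real n) powr (1 / r) = C / root_p n p"
      using C n_pos r real by (simp add: root_p_def powr_diff powr_divide)
    then show ?thesis
      using lp_norm_infinity_convolution_le[OF K0 C r KB _ mass dom] C n_pos real by simp
  next
    case top
    then show ?thesis using lp by (simp add: root_p_def)
  qed
  ultimately show ?thesis by (simp add: C_def)
qed

end
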